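(* Let $P,\widehat P$ be transition kernels on finite $\mathcal S\times\mathcal A$, $r:\mathcal S\times\mathcal A\to[0,1]$, $n$ a positive integer, and $\pi$ a policy whose gain $\rho^\pi$ (under $P$) is a constant vector. Let $\overline h=h^\pi-(\min_sh^\pi(s))\mathbf 1$ and $\ell=\lceil\log_2\log_2(\|\overline h\|_\infty+4)\rceil$. Suppose that for some $\alpha>0$ the elementwise inequalities $$\big|(\widehat P_\pi-P_\pi)\overline h^{\circ2^k}\big|\le\sqrt{\frac{\alpha\,\mathbb V_{P_\pi}[\overline h^{\circ2^k}]}{n}}+\frac{\alpha\,2^k}{n}\big(\|\overline h\|_\infty+1\big)^{2^k}\mathbf 1$$ hold for all $k=0,\dots,\ell$. Then $$\|\widehat\rho^\pi-\rho^\pi\|_\infty\le2(\ell+1)\sqrt{\frac{\alpha(\|\overline h\|_\infty+1)}{n}}+(\ell+1)\frac{2\alpha}{n}\big(\|\overline h\|_\infty+1\big).$$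
   Context: $P_\pi(s,s')=\sum_a\pi(a|s)P(s'|s,a)$, $r_\pi(s)=\sum_a\pi(a|s)r(s,a)$. $P^\infty_\pi$ is the Cesàro limit of $P_\pi^t$; gain $\rho^\pi=P^\infty_\pi r_\pi$, bias $h^\pi=\mathrm{C\text{-}lim}_T\sum_{t<T}(P_\pi^tr_\pi-\rho^\pi)$ (Cesàro limit); $\widehat\rho^\pi=\widehat P^\infty_\pi r_\pi$ is the gain under $\widehat P$. $x^{\circ m}$ is the elementwise $m$-th power; $|\cdot|,\sqrt\cdot$ elementwise. $\mathbb V_{P_\pi}[x](s)=\sum_{s'}P_\pi(s,s')\big(x(s')-\sum_{s''}P_\pi(s,s'')x(s'')\big)^2$. *)

theory Defs
  imports "HOL-Analysis.Analysis"
begin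

(* Finite state space 's, finite action space 'a (finite types).
   A kernel P s a s' = P(s'|s,a); a policy pol s a = pol(a|s). *)

definition stoch_kernel :: "('s::finite \<Rightarrow> 'a::finite \<Rightarrow> 's \<Rightarrow> real) \<Rightarrow> bool" where
  "stoch_kernel P \<longleftrightarrow> (\<forall>s a s'. 0 \<le> P s a s') \<and> (\<forall>s a. (\<Sum>s'\<in>UNIV. P s a s') = 1)"

definition policy :: "('s::finite \<Rightarrow> 'a::finite \<Rightarrow> real) \<Rightarrow> bool" where
  "policy pol \<longleftrightarrow> (\<forall>s a. 0 \<le> pol s a) \<and> (\<forall>s. (\<Sum>a\<in>UNIV. pol s a) = 1)"

definition Ppi :: "('s::finite \<Rightarrow> 'a::finite \<Rightarrow> 's \<Rightarrow> real) \<Rightarrow> ('s \<Rightarrow> 'a \<Rightarrow> real) \<Rightarrow> 's \<Rightarrow> 's \<Rightarrow> real" where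
  "Ppi P pol s s' = (\<Sum>a\<in>UNIV. pol s a * P s a s')"

definition rpi :: "('s::finite \<Rightarrow> 'a::finite \<Rightarrow> real) \<Rightarrow> ('s \<Rightarrow> 'a \<Rightarrow> real) \<Rightarrow> 's \<Rightarrow> real" where
  "rpi r pol s = (\<Sum>a\<in>UNIV. pol s a * r s a)"

definition mvec :: "('s::finite \<Rightarrow> 's \<Rightarrow> real) \<Rightarrow> ('s \<Rightarrow> real) \<Rightarrow> 's \<Rightarrow> real" where
  "mvec M x s = (\<Sum>s'\<in>UNIV. M s s' * x s')"

fun mpow :: "('s::finite \<Rightarrow> 's \<Rightarrow> real) \<Rightarrow> nat \<Rightarrow> 's \<Rightarrow> 's \<Rightarrow> real" where
  "mpow M 0 = (\<lambda>s s'. if s = s' then 1 else 0)"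
| "mpow M (Suc t) = (\<lambda>s s'. \<Sum>u\<in>UNIV. mpow M t s u * M u s')"

definition cesaro_lim :: "(nat \<Rightarrow> real) \<Rightarrow> real" where
  "cesaro_lim x = lim (\<lambda>N. (\<Sum>t<N. x t) / real N)"

definition Pinf :: "('s::finite \<Rightarrow> 's \<Rightarrow> real) \<Rightarrow> 's \<Rightarrow> 's \<Rightarrow> real" where
  "Pinf M s s' = cesaro_lim (\<lambda>t. mpow M t s s')"

definition gain :: "('s::finite \<Rightarrow> 'a::finite \<Rightarrow> 's \<Rightarrow> real) \<Rightarrow> ('s \<Rightarrow> 'a \<Rightarrow> real) \<Rightarrow> ('s \<Rightarrow> 'a \<Rightarrow> real) \<Rightarrow> 's \<Rightarrow> real" where
  "gain P r pol = mvec (Pinf (Ppi P pol)) (rpi r pol)"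

definition bias :: "('s::finite \<Rightarrow> 'a::finite \<Rightarrow> 's \<Rightarrow> real) \<Rightarrow> ('s \<Rightarrow> 'a \<Rightarrow> real) \<Rightarrow> ('s \<Rightarrow> 'a \<Rightarrow> real) \<Rightarrow> 's \<Rightarrow> real" where
  "bias P r pol s = cesaro_lim (\<lambda>T. \<Sum>t<T. mvec (mpow (Ppi P pol) t) (rpi r pol) s - gain P r pol s)"

definition supnorm :: "('s::finite \<Rightarrow> real) \<Rightarrow> real" where
  "supnorm x = Max (range (\<lambda>s. \<bar>x s\<bar>))"

definition varP :: "('s::finite \<Rightarrow> 's \<Rightarrow> real) \<Rightarrow> ('s \<Rightarrow> real) \<Rightarrow> 's \<Rightarrow> real" where
  "varP M x s = (\<Sum>s'\<in>UNIV. M s s' * (x s' - (\<Sum>s''\<in>UNIV. M s s'' * x s''))\<^sup>2)"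

end

theory Submission
  imports Defs
begin

text \<open>
  With constant gain \<rho>, the Poisson equation \<rho> + h = r_\<pi> + P_\<pi> h turns the gain difference
  into \<rho>' - \<rho> = P'^\<infinity> (P'_\<pi> - P_\<pi>) h, because P'^\<infinity> is stationary for P'_\<pi>; here primes
  refer to the perturbed kernel and h is the bias shifted to have minimum 0.
  Let e_k = |P'^\<infinity> (P'_\<pi> - P_\<pi>) h^(2^k)|. Averaging the hypothesis against P'^\<infinity> and
  applying Jensen to the square root bounds e_k by the square root of the averaged variance of
  h^(2^k); by stationarity this average is at most e_(k+1) plus a term controlled through
  h - P_\<pi> h = r_\<pi> - \<rho> \<le> 1. Unrolling the recursion from the trivial bound on e_l,
  with l chosen so that \<parallel>h\<parallel> + 4 \<le> 2^(2^l), gives the claim.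

  P^\<infinity> and the Poisson equation for the Cesaro-defined bias are derived from scratch: the
  Cesaro means of P^t are bounded, every subsequential limit is invariant under P and then
  attracts the whole sequence, and I - P + P^\<infinity> is invertible.
\<close>

section \<open>Stochastic matrices\<close>

declare mpow.simps[simp del]

definition mmul :: "('s::finite \<Rightarrow> 's \<Rightarrow> real) \<Rightarrow> ('s \<Rightarrow> 's \<Rightarrow> real) \<Rightarrow> 's \<Rightarrow> 's \<Rightarrow> real" where
  "mmul A B = (\<lambda>s s'. \<Sum>u\<in>UNIV. A s u * B u s')"

lemma mmul_assoc: "mmul (mmul A B) C = mmul A (mmul B C)"
  unfolding mmul_def sum_distrib_left sum_distrib_right
  by (auto intro!: ext simp: mult.assoc intro: sum.swap)

lemma mmul_mpow_0_right [simp]: "mmul A (mpow M 0) = A"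
  by (simp add: mmul_def fun_eq_iff mpow.simps of_bool_def[symmetric])

lemma mmul_mpow_0_left [simp]: "mmul (mpow M 0) A = A"
  by (simp add: mmul_def fun_eq_iff mpow.simps of_bool_def[symmetric])

lemma mpow_Suc_right: "mpow M (Suc t) = mmul (mpow M t) M"
  by (simp add: mmul_def mpow.simps(2))

lemma mpow_add: "mpow M (a + b) = mmul (mpow M a) (mpow M b)"
  by (induction b) (simp_all add: mpow_Suc_right mmul_assoc)

lemma mpow_1 [simp]: "mpow M 1 = M"
  using mmul_mpow_0_left[of M M] by (simp add: mpow_Suc_right)

lemma mpow_Suc_left: "mpow M (Suc t) = mmul M (mpow M t)"
  by (metis mpow_1 mpow_add plus_1_eq_Suc)

lemma mvec_mvec: "mvec A (mvec B x) = mvec (mmul A B) x"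
  unfolding mvec_def mmul_def sum_distrib_left sum_distrib_right
  by (auto intro!: ext simp: mult.assoc intro: sum.swap)

lemma mvec_add: "mvec A (\<lambda>u. x u + y u) s = mvec A x s + mvec A y s"
  unfolding mvec_def by (simp add: distrib_left sum.distrib)

lemma mvec_cmult: "mvec A (\<lambda>u. c * x u) s = c * mvec A x s"
  unfolding mvec_def by (simp add: sum_distrib_left algebra_simps)

lemma mvec_diff: "mvec A (\<lambda>u. x u - y u) s = mvec A x s - mvec A y s"
  unfolding mvec_def by (simp add: right_diff_distrib sum_subtractf)

lemma mvec_sum: "mvec A (\<lambda>u. \<Sum>t\<in>I. f t u) s = (\<Sum>t\<in>I. mvec A (f t) s)"
  unfolding mvec_def sum_distrib_left by (rule sum.swap)

lemma mvec_divide: "mvec A (\<lambda>u. x u / c) s = mvec A x s / c"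
  unfolding mvec_def by (simp add: sum_divide_distrib)

lemma mvec_mpow_0 [simp]: "mvec (mpow M 0) x = x"
  by (simp add: mvec_def fun_eq_iff mpow.simps of_bool_def[symmetric])

lemma weighted_sum_le:
  fixes p d :: "'s::finite \<Rightarrow> real"
  assumes "\<And>j. 0 \<le> p j" "(\<Sum>j\<in>UNIV. p j) = 1" "\<And>j. d j \<le> c"
  shows "(\<Sum>j\<in>UNIV. p j * d j) \<le> c"
proof -
  have "(\<Sum>j\<in>UNIV. p j * d j) \<le> (\<Sum>j\<in>UNIV. p j * c)"
    using assms by (intro sum_mono mult_left_mono) auto
  also have "\<dots> = c" using assms(2) by (simp add: sum_distrib_right[symmetric])
  finally show ?thesis .
qed

lemma weighted_sum_ge:
  fixes p d :: "'s::finite \<Rightarrow> real"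
  assumes "\<And>j. 0 \<le> p j" "(\<Sum>j\<in>UNIV. p j) = 1" "\<And>j. c \<le> d j"
  shows "c \<le> (\<Sum>j\<in>UNIV. p j * d j)"
  using weighted_sum_le[of p "\<lambda>j. - d j" "- c"] assms by (simp add: sum_negf)

locale stoch_matrix =
  fixes M :: "'s::finite \<Rightarrow> 's \<Rightarrow> real"
  assumes nonneg: "0 \<le> M s s'"
    and row_sum: "(\<Sum>s'\<in>UNIV. M s s') = 1"
begin

lemma le_one: "M s s' \<le> 1"
  using member_le_sum[of s' UNIV "M s"] nonneg row_sum by simp

lemma mvec_const [simp]: "mvec M (\<lambda>_. c) s = c"
  unfolding mvec_def using row_sum by (simp add: sum_distrib_right[symmetric])

lemma mvec_le: "(\<And>j. x j \<le> b) \<Longrightarrow> mvec M x s \<le> b"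
  unfolding mvec_def by (rule weighted_sum_le[OF nonneg row_sum])

lemma mvec_ge: "(\<And>j. a \<le> x j) \<Longrightarrow> a \<le> mvec M x s"
  unfolding mvec_def by (rule weighted_sum_ge[OF nonneg row_sum])

lemma mvec_mono: "(\<And>j. x j \<le> y j) \<Longrightarrow> mvec M x s \<le> mvec M y s"
  unfolding mvec_def by (intro sum_mono mult_left_mono nonneg)

lemma abs_mvec_le_mvec_abs: "\<bar>mvec M x s\<bar> \<le> mvec M (\<lambda>j. \<bar>x j\<bar>) s"
  unfolding mvec_def using sum_abs[of "\<lambda>j. M s j * x j" UNIV] nonneg by (simp add: abs_mult)

lemma mvec_shift: "mvec M (\<lambda>j. x j - c) s = mvec M x s - c"
  by (simp add: mvec_diff)

lemma abs_mvec_le: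
  assumes "\<And>j. \<bar>x j\<bar> \<le> b"
  shows "\<bar>mvec M x s\<bar> \<le> b"
proof -
  have "mvec M x s \<le> b" using assms by (intro mvec_le) (force simp: abs_le_iff)
  moreover have "- b \<le> mvec M x s" using assms by (intro mvec_ge) (metis abs_le_iff minus_le_iff)
  ultimately show ?thesis by linarith
qed

end

lemma stoch_matrix_mmul:
  assumes "stoch_matrix A" "stoch_matrix B"
  shows "stoch_matrix (mmul A B)"
proof
  interpret A: stoch_matrix A by fact
  interpret B: stoch_matrix B by fact
  show "0 \<le> mmul A B s s'" for s s'
    unfolding mmul_def by (intro sum_nonneg mult_nonneg_nonneg A.nonneg B.nonneg)
  show "(\<Sum>s'\<in>UNIV. mmul A B s s') = 1" for s
  proof -
    have "(\<Sum>s'\<in>UNIV. mmul A B s s') = (\<Sum>u\<in>UNIV. A s u * (\<Sum>s'\<in>UNIV. B u s'))"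
      unfolding mmul_def sum_distrib_left by (rule sum.swap)
    then show ?thesis by (simp add: B.row_sum A.row_sum)
  qed
qed

lemma stoch_matrix_mpow: "stoch_matrix M \<Longrightarrow> stoch_matrix (mpow M t)"
proof (induction t)
  case 0
  show ?case by unfold_locales (auto simp: mpow.simps)
next
  case (Suc t)
  then show ?case by (simp add: mpow_Suc_right stoch_matrix_mmul)
qed

section \<open>The limiting matrix\<close>

definition cesaro_mean :: "('s::finite \<Rightarrow> 's \<Rightarrow> real) \<Rightarrow> nat \<Rightarrow> 's \<Rightarrow> 's \<Rightarrow> real" where
  "cesaro_mean M N s s' = (\<Sum>t<N. mpow M t s s') / real N"

lemma mmul_cesaro_mean_left:
  "mmul (cesaro_mean M N) X s s' = (\<Sum>t<N. mmul (mpow M t) X s s') / real N"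
  unfolding mmul_def cesaro_mean_def sum_divide_distrib sum_distrib_right
  by (subst sum.swap) (simp add: algebra_simps)

lemma mmul_cesaro_mean_right:
  "mmul X (cesaro_mean M N) s s' = (\<Sum>t<N. mmul X (mpow M t) s s') / real N"
  unfolding mmul_def cesaro_mean_def sum_divide_distrib sum_distrib_left
  by (subst sum.swap) (simp add: algebra_simps)

lemma mvec_cesaro_mean: "mvec (cesaro_mean M N) x s = (\<Sum>t<N. mvec (mpow M t) x s) / real N"
  unfolding mvec_def cesaro_mean_def sum_divide_distrib sum_distrib_right
  by (subst sum.swap) (simp add: algebra_simps)

lemma cesaro_mean_mmul_diff:
  "mmul (cesaro_mean M N) M s s' - cesaro_mean M N s s' = (mpow M N s s' - mpow M 0 s s') / real N"
  "mmul M (cesaro_mean M N) s s' - cesaro_mean M N s s' = (mpow M N s s' - mpow M 0 s s') / real N"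
  unfolding mmul_cesaro_mean_left mmul_cesaro_mean_right cesaro_mean_def
  by (simp_all add: mpow_Suc_right[symmetric] mpow_Suc_left[symmetric] diff_divide_distrib[symmetric]
      sum_subtractf[symmetric] sum_lessThan_telescope[of "\<lambda>n. mpow M n s s'"])

lemma sum_shift_diff_le:
  fixes m :: "nat \<Rightarrow> real"
  assumes "\<And>j. 0 \<le> m j \<and> m j \<le> 1"
  shows "\<bar>(\<Sum>j<N. m j) - (\<Sum>j<N. m (j + t))\<bar> \<le> real t"
proof (induction t)
  case (Suc t)
  have "(\<Sum>j<N. m (j + Suc t)) = (\<Sum>j<N. m (j + t)) + m (N + t) - m t"
    using sum.lessThan_Suc_shift[of "\<lambda>j. m (j + t)" N] by simp
  moreover have "\<bar>m (N + t) - m t\<bar> \<le> 1" using assms[of "N + t"] assms[of t] by auto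
  ultimately show ?case using Suc by (simp add: abs_le_iff)
qed simp

lemma LIMSEQ_unique_Suc:
  fixes f g :: "nat \<Rightarrow> real"
  assumes "f \<longlonglongrightarrow> a" "g \<longlonglongrightarrow> b" "\<And>N. N > 0 \<Longrightarrow> f N = g N"
  shows "a = b"
proof -
  have "\<forall>\<^sub>F N in sequentially. f N = g N"
    by (rule eventually_sequentiallyI[of 1]) (simp add: assms(3))
  then show ?thesis using Lim_transform_eventually[OF assms(1)] assms(2) LIMSEQ_unique by blast
qed

context stoch_matrix
begin

lemma mpow_nonneg: "0 \<le> mpow M t s s'"
  using stoch_matrix.nonneg[OF stoch_matrix_mpow[OF stoch_matrix_axioms]] .

lemma mpow_le_one: "mpow M t s s' \<le> 1"
  using stoch_matrix.le_one[OF stoch_matrix_mpow[OF stoch_matrix_axioms]] .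

lemma mpow_row_sum: "(\<Sum>s'\<in>UNIV. mpow M t s s') = 1"
  using stoch_matrix.row_sum[OF stoch_matrix_mpow[OF stoch_matrix_axioms]] .

lemma cesaro_mean_nonneg: "0 \<le> cesaro_mean M N s s'"
  unfolding cesaro_mean_def by (simp add: sum_nonneg mpow_nonneg)

lemma stoch_matrix_cesaro_mean:
  assumes "N > 0"
  shows "stoch_matrix (cesaro_mean M N)"
proof
  show "0 \<le> cesaro_mean M N s s'" for s s' by (rule cesaro_mean_nonneg)
  show "(\<Sum>s'\<in>UNIV. cesaro_mean M N s s') = 1" for s
  proof -
    have "(\<Sum>s'\<in>UNIV. cesaro_mean M N s s') = (\<Sum>t<N. \<Sum>s'\<in>UNIV. mpow M t s s') / real N"
      unfolding cesaro_mean_def sum_divide_distrib[symmetric] by (subst sum.swap) (rule refl)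
    then show ?thesis using assms by (simp add: mpow_row_sum)
  qed
qed

lemma cesaro_mean_le_one: "cesaro_mean M N s s' \<le> 1"
  using stoch_matrix.le_one[OF stoch_matrix_cesaro_mean] by (cases "N = 0") (auto simp: cesaro_mean_def)

lemma mpow_telescope_tendsto_0: "(\<lambda>N. (mpow M N s s' - mpow M 0 s s') / real N) \<longlonglongrightarrow> 0"
proof (rule Lim_null_comparison)
  have "\<bar>mpow M N s s' - mpow M 0 s s'\<bar> \<le> 1" for N
    using mpow_nonneg[of N s s'] mpow_le_one[of N s s'] mpow_nonneg[of 0 s s'] mpow_le_one[of 0 s s']
    by (simp add: abs_le_iff)
  then show "\<forall>\<^sub>F N in sequentially. norm ((mpow M N s s' - mpow M 0 s s') / real N) \<le> 1 / real N"
    by (intro always_eventually allI) (simp add: divide_right_mono)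
qed (rule lim_const_over_n)

lemma cesaro_limit_invariant:
  assumes "strict_mono \<phi>" and lim: "\<And>s s'. (\<lambda>k. cesaro_mean M (\<phi> k) s s') \<longlonglongrightarrow> L s s'"
  shows "mmul L M = L" "mmul M L = L"
proof -
  have diff_0: "(\<lambda>k. (mpow M (\<phi> k) s s' - mpow M 0 s s') / real (\<phi> k)) \<longlonglongrightarrow> 0" for s s'
    using LIMSEQ_subseq_LIMSEQ[OF mpow_telescope_tendsto_0 assms(1)] by (simp add: o_def)
  show "mmul L M = L"
  proof (intro ext)
    fix s s'
    have "(\<lambda>k. mmul (cesaro_mean M (\<phi> k)) M s s' - cesaro_mean M (\<phi> k) s s')
        \<longlonglongrightarrow> mmul L M s s' - L s s'"
      unfolding mmul_def by (intro tendsto_intros lim)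
    with diff_0 show "mmul L M s s' = L s s'"
      unfolding cesaro_mean_mmul_diff using LIMSEQ_unique by fastforce
  qed
  show "mmul M L = L"
  proof (intro ext)
    fix s s'
    have "(\<lambda>k. mmul M (cesaro_mean M (\<phi> k)) s s' - cesaro_mean M (\<phi> k) s s')
        \<longlonglongrightarrow> mmul M L s s' - L s s'"
      unfolding mmul_def by (intro tendsto_intros lim)
    with diff_0 show "mmul M L s s' = L s s'"
      unfolding cesaro_mean_mmul_diff using LIMSEQ_unique by fastforce
  qed
qed

lemma mpow_mmul_invariant:
  assumes "mmul M L = L"
  shows "mmul (mpow M t) L = L"
  by (induction t) (simp_all add: mpow_Suc_left mmul_assoc assms)

lemma mmul_invariant_mpow:
  assumes "mmul L M = L"
  shows "mmul L (mpow M t) = L"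
  by (induction t) (simp_all add: mpow_Suc_right mmul_assoc[symmetric] assms)

lemma cesaro_mean_mmul_cesaro_mean_approx:
  assumes "N > 0" "K > 0"
  shows "\<bar>cesaro_mean M N s s' - mmul (cesaro_mean M N) (cesaro_mean M K) s s'\<bar> \<le> real K / real N"
proof -
  have shift: "\<bar>cesaro_mean M N s s' - mmul (cesaro_mean M N) (mpow M t) s s'\<bar> \<le> real K / real N"
    if "t < K" for t
  proof -
    have "cesaro_mean M N s s' - mmul (cesaro_mean M N) (mpow M t) s s'
        = ((\<Sum>j<N. mpow M j s s') - (\<Sum>j<N. mpow M (j + t) s s')) / real N"
      unfolding mmul_cesaro_mean_left cesaro_mean_def by (simp add: mpow_add diff_divide_distrib)
    also have "\<bar>\<dots>\<bar> \<le> real t / real N"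
      using sum_shift_diff_le[of "\<lambda>j. mpow M j s s'" N t] mpow_nonneg mpow_le_one
      by (simp add: divide_right_mono)
    also have "\<dots> \<le> real K / real N" using that by (simp add: divide_right_mono)
    finally show ?thesis .
  qed
  have "cesaro_mean M N s s' - mmul (cesaro_mean M N) (cesaro_mean M K) s s'
      = (\<Sum>t<K. cesaro_mean M N s s' - mmul (cesaro_mean M N) (mpow M t) s s') / real K"
    unfolding mmul_cesaro_mean_right using \<open>K > 0\<close> by (simp add: sum_subtractf diff_divide_distrib)
  also have "\<bar>\<dots>\<bar> \<le> (\<Sum>t<K. real K / real N) / real K"
    unfolding abs_divide abs_of_nat using shift
    by (intro divide_right_mono order_trans[OF sum_abs] sum_mono) auto
  also have "\<dots> = real K / real N" using \<open>K > 0\<close> by simp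
  finally show ?thesis .
qed

lemma cesaro_mean_dist_invariant_le:
  assumes "mmul M L = L" "N > 0" "K > 0" "\<And>u v. \<bar>cesaro_mean M K u v - L u v\<bar> \<le> \<delta>"
  shows "\<bar>cesaro_mean M N s s' - L s s'\<bar> \<le> real K / real N + \<delta>"
proof -
  have "mmul (cesaro_mean M N) L = L"
    using assms(2) by (simp add: fun_eq_iff mmul_cesaro_mean_left mpow_mmul_invariant[OF assms(1)])
  then have "cesaro_mean M N s s' - L s s'
      = (cesaro_mean M N s s' - mmul (cesaro_mean M N) (cesaro_mean M K) s s')
        + mvec (cesaro_mean M N) (\<lambda>u. cesaro_mean M K u s' - L u s') s"
    unfolding mvec_diff by (simp add: mvec_def mmul_def fun_eq_iff)
  moreover have "\<bar>mvec (cesaro_mean M N) (\<lambda>u. cesaro_mean M K u s' - L u s') s\<bar> \<le> \<delta>"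
    using assms(4) by (intro stoch_matrix.abs_mvec_le[OF stoch_matrix_cesaro_mean[OF assms(2)]])
  ultimately show ?thesis
    using cesaro_mean_mmul_cesaro_mean_approx[OF assms(2,3), of s s'] by linarith
qed

lemma cesaro_mean_convergent_subseq:
  "\<exists>\<phi> L. strict_mono \<phi> \<and> (\<forall>s s'. (\<lambda>k. cesaro_mean M (\<phi> k) s s') \<longlonglongrightarrow> L s s')"
proof -
  define V :: "nat \<Rightarrow> real^('s\<times>'s)" where "V N = (\<chi> p. cesaro_mean M N (fst p) (snd p))" for N
  have "norm (V N) \<le> real CARD('s\<times>'s)" for N
  proof -
    have "norm (V N) \<le> (\<Sum>p\<in>UNIV. \<bar>V N $ p\<bar>)" by (rule norm_le_l1_cart)
    also have "\<dots> \<le> (\<Sum>p\<in>(UNIV::('s\<times>'s) set). 1)"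
      using cesaro_mean_nonneg cesaro_mean_le_one by (intro sum_mono) (simp add: V_def)
    finally show ?thesis by simp
  qed
  then have "bounded (range V)" by (auto simp: bounded_iff)
  then obtain L \<phi> where "strict_mono \<phi>" "(V \<circ> \<phi>) \<longlonglongrightarrow> L"
    using bounded_imp_convergent_subsequence by blast
  then show ?thesis
    by (intro exI[of _ \<phi>] exI[of _ "\<lambda>s s'. L $ (s, s')"])
      (auto dest: tendsto_vec_nth[where i="(_, _)"] simp: V_def o_def)
qed

(* An invariant subsequential limit L attracts the whole sequence: the mean of order N is within
   K/N of its product with the mean of order K, which in turn is close to its product with L,
   and that product is L itself. *)
lemma cesaro_mean_convergent: "\<exists>L. \<forall>s s'. (\<lambda>N. cesaro_mean M N s s') \<longlonglongrightarrow> L s s'"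
proof -
  obtain \<phi> L where \<phi>: "strict_mono \<phi>" and sub: "\<And>s s'. (\<lambda>k. cesaro_mean M (\<phi> k) s s') \<longlonglongrightarrow> L s s'"
    using cesaro_mean_convergent_subseq by blast
  have inv: "mmul M L = L" using cesaro_limit_invariant(2)[OF \<phi> sub] .
  have "(\<lambda>N. cesaro_mean M N s s') \<longlonglongrightarrow> L s s'" for s s'
  proof (rule LIMSEQ_I)
    fix \<epsilon> :: real assume "\<epsilon> > 0"
    have "\<forall>\<^sub>F k in sequentially. \<forall>u v. \<bar>cesaro_mean M (\<phi> k) u v - L u v\<bar> \<le> \<epsilon> / 2"
    proof (intro eventually_all_finite)
      fix u v
      show "\<forall>\<^sub>F k in sequentially. \<bar>cesaro_mean M (\<phi> k) u v - L u v\<bar> \<le> \<epsilon> / 2"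
        using tendstoD[OF sub[of u v], of "\<epsilon> / 2"] \<open>\<epsilon> > 0\<close>
        by (auto simp: dist_real_def elim: eventually_mono)
    qed
    then obtain k0 where k0: "\<And>k. k \<ge> k0 \<Longrightarrow> \<forall>u v. \<bar>cesaro_mean M (\<phi> k) u v - L u v\<bar> \<le> \<epsilon> / 2"
      unfolding eventually_sequentially by blast
    define K where "K = \<phi> (Suc k0)"
    have "K > 0" using seq_suble[OF \<phi>, of "Suc k0"] unfolding K_def by simp
    obtain N0 :: nat where N0: "2 * real K / \<epsilon> < real N0" using reals_Archimedean2 by blast
    have "\<bar>cesaro_mean M N s s' - L s s'\<bar> < \<epsilon>" if "N \<ge> Suc N0" for N
    proof -
      have "N > 0" using that by simp
      have "2 * real K < real N0 * \<epsilon>" using N0 \<open>\<epsilon> > 0\<close> by (simp add: pos_divide_less_eq)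
      also have "\<dots> \<le> real N * \<epsilon>" using that \<open>\<epsilon> > 0\<close> by (intro mult_right_mono) auto
      finally have "real K / real N < \<epsilon> / 2" using \<open>N > 0\<close> by (simp add: field_simps)
      moreover have "\<bar>cesaro_mean M N s s' - L s s'\<bar> \<le> real K / real N + \<epsilon> / 2"
        using k0[of "Suc k0"] unfolding K_def
        by (intro cesaro_mean_dist_invariant_le[OF inv \<open>N > 0\<close> \<open>K > 0\<close>[unfolded K_def]]) auto
      ultimately show ?thesis by linarith
    qed
    then show "\<exists>N0. \<forall>N\<ge>N0. norm (cesaro_mean M N s s' - L s s') < \<epsilon>" by auto
  qed
  then show ?thesis by blast
qed

lemma cesaro_mean_tendsto_Pinf: "(\<lambda>N. cesaro_mean M N s s') \<longlonglongrightarrow> Pinf M s s'"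
proof -
  obtain L where "\<And>s s'. (\<lambda>N. cesaro_mean M N s s') \<longlonglongrightarrow> L s s'"
    using cesaro_mean_convergent by blast
  moreover have "Pinf M s s' = lim (\<lambda>N. cesaro_mean M N s s')"
    unfolding Pinf_def cesaro_lim_def cesaro_mean_def ..
  ultimately show ?thesis by (metis limI)
qed

lemma stoch_matrix_Pinf: "stoch_matrix (Pinf M)"
proof
  show "0 \<le> Pinf M s s'" for s s'
    by (intro LIMSEQ_le_const[OF cesaro_mean_tendsto_Pinf]) (auto intro: cesaro_mean_nonneg)
  show "(\<Sum>s'\<in>UNIV. Pinf M s s') = 1" for s
  proof -
    have "(\<lambda>N. \<Sum>s'\<in>UNIV. cesaro_mean M N s s') \<longlonglongrightarrow> (\<Sum>s'\<in>UNIV. Pinf M s s')"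
      by (intro tendsto_sum cesaro_mean_tendsto_Pinf)
    then show ?thesis
      using tendsto_const by (rule LIMSEQ_unique_Suc) (simp add: stoch_matrix.row_sum[OF stoch_matrix_cesaro_mean])
  qed
qed

lemma Pinf_mmul_self: "mmul (Pinf M) M = Pinf M"
  and self_mmul_Pinf: "mmul M (Pinf M) = Pinf M"
  using cesaro_limit_invariant[of "\<lambda>k. k" "Pinf M"] cesaro_mean_tendsto_Pinf
  by (simp_all add: strict_mono_def)

lemma Pinf_mmul_Pinf: "mmul (Pinf M) (Pinf M) = Pinf M"
proof (intro ext)
  fix s s'
  have "(\<lambda>N. mmul (Pinf M) (cesaro_mean M N) s s') \<longlonglongrightarrow> mmul (Pinf M) (Pinf M) s s'"
    unfolding mmul_def by (intro tendsto_intros cesaro_mean_tendsto_Pinf)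
  then show "mmul (Pinf M) (Pinf M) s s' = Pinf M s s'"
    using tendsto_const by (rule LIMSEQ_unique_Suc)
      (simp add: mmul_cesaro_mean_right mmul_invariant_mpow[OF Pinf_mmul_self])
qed

lemma cesaro_mean_mvec_tendsto_Pinf: "(\<lambda>N. mvec (cesaro_mean M N) x s) \<longlonglongrightarrow> mvec (Pinf M) x s"
  unfolding mvec_def by (intro tendsto_intros cesaro_mean_tendsto_Pinf)

end

section \<open>The Poisson equation\<close>

definition bias_partial_sum :: "('s::finite \<Rightarrow> 's \<Rightarrow> real) \<Rightarrow> ('s \<Rightarrow> real) \<Rightarrow> nat \<Rightarrow> 's \<Rightarrow> real" where
  "bias_partial_sum M r T s = (\<Sum>t<T. mvec (mpow M t) r s - mvec (Pinf M) r s)"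

definition bias_cesaro_mean :: "('s::finite \<Rightarrow> 's \<Rightarrow> real) \<Rightarrow> ('s \<Rightarrow> real) \<Rightarrow> nat \<Rightarrow> 's \<Rightarrow> real" where
  "bias_cesaro_mean M r N s = (\<Sum>T<N. bias_partial_sum M r T s) / real N"

context stoch_matrix
begin

lemma Pinf_mvec_self: "mvec (Pinf M) (mvec M x) = mvec (Pinf M) x"
  by (simp add: mvec_mvec Pinf_mmul_self)

lemma Pinf_mvec_mpow: "mvec (Pinf M) (mvec (mpow M t) x) = mvec (Pinf M) x"
  by (simp add: mvec_mvec mmul_invariant_mpow[OF Pinf_mmul_self])

lemma Pinf_mvec_Pinf: "mvec (Pinf M) (mvec (Pinf M) x) = mvec (Pinf M) x"
  by (simp add: mvec_mvec Pinf_mmul_Pinf)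

lemma self_mvec_Pinf: "mvec M (mvec (Pinf M) x) = mvec (Pinf M) x"
  by (simp add: mvec_mvec self_mmul_Pinf)

lemma fundamental_matrix_kernel:
  assumes z: "\<And>j. z j - mvec M z j + mvec (Pinf M) z j = 0"
  shows "z s = 0"
proof -
  have "mvec (Pinf M) (\<lambda>j. z j - mvec M z j + mvec (Pinf M) z j) s = mvec (Pinf M) z s" for s
    by (simp only: mvec_add mvec_diff Pinf_mvec_self Pinf_mvec_Pinf)
  moreover have "(\<lambda>j. z j - mvec M z j + mvec (Pinf M) z j) = (\<lambda>_. 0)"
    by (rule ext) (rule z)
  ultimately have Pinf_z: "mvec (Pinf M) z s = 0" for s
    using stoch_matrix.mvec_const[OF stoch_matrix_Pinf, of 0] by metis
  have "mvec M z = z"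
  proof
    fix j show "mvec M z j = z j" using z[of j] Pinf_z[of j] by linarith
  qed
  then have "mvec (mpow M t) z = z" for t
    by (induction t) (simp_all add: mpow_Suc_right mvec_mvec[symmetric])
  then have "mvec (cesaro_mean M N) z s = z s" if "N > 0" for N
    using that by (simp add: mvec_cesaro_mean)
  then show "z s = 0"
    using LIMSEQ_unique_Suc[OF cesaro_mean_mvec_tendsto_Pinf[of z s] tendsto_const] Pinf_z by simp
qed

lemma fundamental_matrix_left_inverse:
  "\<exists>B. \<forall>c s. c s = (\<Sum>j\<in>UNIV. B s j * (c j - mvec M c j + mvec (Pinf M) c j))"
proof -
  define D :: "real^'s^'s" where "D = (\<chi> i k. of_bool (i = k) - M i k + Pinf M i k)"
  have D_apply: "(D *v v) $ j = v $ j - mvec M (($) v) j + mvec (Pinf M) (($) v) j" for v j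
    unfolding D_def matrix_vector_mult_def mvec_def
    by (simp add: left_diff_distrib distrib_right sum.distrib sum_subtractf)
  have "inj ((*v) D)"
  proof (rule injI)
    fix x y assume "D *v x = D *v y"
    then have "D *v (x - y) = 0" by (simp only: matrix_vector_mult_diff_distrib diff_self)
    then have "(x - y) $ i - mvec M (($) (x - y)) i + mvec (Pinf M) (($) (x - y)) i = 0" for i
      by (metis D_apply zero_index)
    then have "(x - y) $ j = 0" for j by (rule fundamental_matrix_kernel)
    then show "x = y" by (simp add: vec_eq_iff)
  qed
  then obtain B where B: "B ** D = mat 1" using matrix_left_invertible_injective by blast
  have "c s = (\<Sum>j\<in>UNIV. B $ s $ j * (c j - mvec M c j + mvec (Pinf M) c j))" for c s
  proof -
    have "($) (vec_lambda c) = c" by (simp add: fun_eq_iff)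
    then have Dc: "(D *v vec_lambda c) $ j = c j - mvec M c j + mvec (Pinf M) c j" for j
      using D_apply[of "vec_lambda c" j] by simp
    have "c s = (B *v (D *v vec_lambda c)) $ s"
      by (simp add: matrix_vector_mul_assoc B matrix_vector_mul_lid)
    also have "\<dots> = (\<Sum>j\<in>UNIV. B $ s $ j * (D *v vec_lambda c) $ j)"
      by (simp only: matrix_vector_mult_def vec_lambda_beta)
    finally show ?thesis by (simp only: Dc)
  qed
  then show ?thesis by (intro exI[of _ "\<lambda>s j. B $ s $ j"]) blast
qed

lemma fundamental_matrix_inverse_tendsto:
  assumes "\<And>j. (\<lambda>N. z N j - mvec M (z N) j + mvec (Pinf M) (z N) j) \<longlonglongrightarrow> w j"
  shows "\<exists>y. \<forall>s. (\<lambda>N. z N s) \<longlonglongrightarrow> y s"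
proof -
  obtain B where B: "\<And>c s. c s = (\<Sum>j\<in>UNIV. B s j * (c j - mvec M c j + mvec (Pinf M) c j))"
    using fundamental_matrix_left_inverse by blast
  have "(\<lambda>N. z N s) \<longlonglongrightarrow> (\<Sum>j\<in>UNIV. B s j * w j)" for s
    by (subst B) (intro tendsto_intros assms)
  then show ?thesis by (intro exI[of _ "\<lambda>s. \<Sum>j\<in>UNIV. B s j * w j"]) blast
qed

lemma bias_partial_sum_Suc:
  "bias_partial_sum M r (Suc T) s = r s - mvec (Pinf M) r s + mvec M (bias_partial_sum M r T) s"
proof -
  have "mvec M (bias_partial_sum M r T) s
      = (\<Sum>t<T. mvec (mpow M (Suc t)) r s - mvec (Pinf M) r s)"
    unfolding bias_partial_sum_def mvec_sum mvec_diff mvec_mvec mpow_Suc_left self_mmul_Pinf ..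
  then show ?thesis unfolding bias_partial_sum_def sum.lessThan_Suc_shift by simp
qed

lemma Pinf_mvec_bias_partial_sum: "mvec (Pinf M) (bias_partial_sum M r T) s = 0"
  unfolding bias_partial_sum_def mvec_sum mvec_diff Pinf_mvec_mpow Pinf_mvec_Pinf by simp

lemma Pinf_mvec_bias_cesaro_mean: "mvec (Pinf M) (bias_cesaro_mean M r N) s = 0"
  unfolding bias_cesaro_mean_def mvec_divide mvec_sum Pinf_mvec_bias_partial_sum by simp

lemma bias_cesaro_mean_poisson:
  assumes "N > 0"
  shows "bias_cesaro_mean M r N s + mvec (cesaro_mean M N) r s = r s + mvec M (bias_cesaro_mean M r N) s"
proof -
  let ?S = "\<lambda>T. bias_partial_sum M r T s"
  have "(\<Sum>T<N. ?S (Suc T)) = (\<Sum>T<N. ?S T) + ?S N"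
    using sum.lessThan_Suc_shift[of ?S N] by (simp add: bias_partial_sum_def)
  moreover have "(\<Sum>T<N. ?S (Suc T))
      = real N * (r s - mvec (Pinf M) r s) + (\<Sum>T<N. mvec M (bias_partial_sum M r T) s)"
    unfolding bias_partial_sum_Suc by (simp add: sum.distrib)
  moreover have "?S N / real N = mvec (cesaro_mean M N) r s - mvec (Pinf M) r s"
    unfolding bias_partial_sum_def mvec_cesaro_mean using assms
    by (simp add: sum_subtractf diff_divide_distrib)
  moreover have "mvec M (bias_cesaro_mean M r N) s = (\<Sum>T<N. mvec M (bias_partial_sum M r T) s) / real N"
    unfolding bias_cesaro_mean_def mvec_divide mvec_sum ..
  ultimately show ?thesis using assms unfolding bias_cesaro_mean_def by (simp add: field_simps)
qed

lemma bias_cesaro_mean_tendsto: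
  "(\<lambda>N. bias_cesaro_mean M r N s) \<longlonglongrightarrow> cesaro_lim (\<lambda>T. bias_partial_sum M r T s)"
proof -
  have "\<exists>y. \<forall>s. (\<lambda>N. bias_cesaro_mean M r N s) \<longlonglongrightarrow> y s"
  proof (rule fundamental_matrix_inverse_tendsto)
    fix j
    have "(\<lambda>N. r j - mvec (cesaro_mean M N) r j) \<longlonglongrightarrow> r j - mvec (Pinf M) r j"
      by (intro tendsto_intros cesaro_mean_mvec_tendsto_Pinf)
    moreover have "\<forall>\<^sub>F N in sequentially. r j - mvec (cesaro_mean M N) r j
        = bias_cesaro_mean M r N j - mvec M (bias_cesaro_mean M r N) j
          + mvec (Pinf M) (bias_cesaro_mean M r N) j"
      using bias_cesaro_mean_poisson Pinf_mvec_bias_cesaro_mean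
      by (intro eventually_sequentiallyI[of 1]) (simp add: algebra_simps)
    ultimately show "(\<lambda>N. bias_cesaro_mean M r N j - mvec M (bias_cesaro_mean M r N) j
        + mvec (Pinf M) (bias_cesaro_mean M r N) j) \<longlonglongrightarrow> r j - mvec (Pinf M) r j"
      by (rule Lim_transform_eventually)
  qed
  then obtain y where y: "\<And>s. (\<lambda>N. bias_cesaro_mean M r N s) \<longlonglongrightarrow> y s" by blast
  moreover have "cesaro_lim (\<lambda>T. bias_partial_sum M r T s) = lim (\<lambda>N. bias_cesaro_mean M r N s)"
    unfolding cesaro_lim_def bias_cesaro_mean_def ..
  ultimately show ?thesis using limI[OF y] by simp
qed

lemma poisson_equation:
  fixes r :: "'s \<Rightarrow> real"
  defines "h \<equiv> \<lambda>s. cesaro_lim (\<lambda>T. bias_partial_sum M r T s)"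
  shows "mvec (Pinf M) r s + h s = r s + mvec M h s"
proof -
  have "(\<lambda>N. bias_cesaro_mean M r N s + mvec (cesaro_mean M N) r s) \<longlonglongrightarrow> h s + mvec (Pinf M) r s"
    unfolding h_def by (intro tendsto_intros bias_cesaro_mean_tendsto cesaro_mean_mvec_tendsto_Pinf)
  moreover have "(\<lambda>N. r s + mvec M (bias_cesaro_mean M r N) s) \<longlonglongrightarrow> r s + mvec M h s"
    unfolding mvec_def h_def by (intro tendsto_intros bias_cesaro_mean_tendsto)
  ultimately have "h s + mvec (Pinf M) r s = r s + mvec M h s"
    using bias_cesaro_mean_poisson by (rule LIMSEQ_unique_Suc)
  then show ?thesis by simp
qed

end

section \<open>Variance bounds\<close>

lemma power_diff_le:
  fixes a b :: real
  assumes "0 \<le> b" "b \<le> a"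
  shows "a ^ m - b ^ m \<le> real m * a ^ (m - 1) * (a - b)"
proof (induction m)
  case (Suc m)
  have "a ^ Suc m - b ^ Suc m = a * (a ^ m - b ^ m) + b ^ m * (a - b)" by (simp add: algebra_simps)
  also have "\<dots> \<le> a * (real m * a ^ (m - 1) * (a - b)) + a ^ m * (a - b)"
    using Suc assms by (intro add_mono mult_left_mono mult_right_mono power_mono) simp_all
  also have "a * (real m * a ^ (m - 1) * (a - b)) = real m * a ^ m * (a - b)"
    by (cases m) (simp_all add: algebra_simps)
  finally show ?case by (simp add: algebra_simps)
qed simp

lemma power_diff_le_of_diff_le_1:
  fixes a b H :: real
  assumes "0 \<le> a" "a \<le> H" "0 \<le> b" "a - b \<le> 1"
  shows "a ^ m - b ^ m \<le> real m * H ^ (m - 1)"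
proof (cases "a \<le> b")
  case True
  then have "a ^ m \<le> b ^ m" using assms by (intro power_mono) simp_all
  moreover have "0 \<le> real m * H ^ (m - 1)" using assms by simp
  ultimately show ?thesis by linarith
next
  case False
  then have "a ^ m - b ^ m \<le> real m * a ^ (m - 1) * (a - b)" using assms by (intro power_diff_le) simp_all
  also have "\<dots> \<le> real m * H ^ (m - 1) * 1"
    using assms False by (intro mult_mono power_mono) simp_all
  finally show ?thesis by simp
qed

lemma power_Suc_add_le:
  fixes a b :: real
  assumes "0 \<le> a" "0 \<le> b"
  shows "a ^ Suc m + b ^ Suc m \<le> (a + b) ^ Suc m"
proof (induction m)
  case (Suc m)
  have "a ^ Suc (Suc m) + b ^ Suc (Suc m) \<le> (a + b) * (a ^ Suc m + b ^ Suc m)"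
    using assms by (simp add: algebra_simps)
  also have "\<dots> \<le> (a + b) * (a + b) ^ Suc m"
    using Suc assms by (intro mult_left_mono) simp_all
  finally show ?case by simp
qed simp

context stoch_matrix
begin

lemma varP_nonneg: "0 \<le> varP M x s"
  unfolding varP_def by (intro sum_nonneg mult_nonneg_nonneg nonneg) simp

lemma varP_eq: "varP M x s = mvec M (\<lambda>j. (x j)\<^sup>2) s - (mvec M x s)\<^sup>2"
proof -
  define \<mu> where "\<mu> = mvec M x s"
  have "varP M x s = (\<Sum>j\<in>UNIV. M s j * (x j)\<^sup>2 - 2 * \<mu> * (M s j * x j) + \<mu>\<^sup>2 * M s j)"
    unfolding varP_def mvec_def[symmetric] \<mu>_def[symmetric]
    by (rule sum.cong) (auto simp: power2_diff algebra_simps)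
  also have "\<dots> = mvec M (\<lambda>j. (x j)\<^sup>2) s - 2 * \<mu> * \<mu> + \<mu>\<^sup>2"
    unfolding sum.distrib sum_subtractf sum_distrib_left[symmetric] sum_distrib_right[symmetric]
      row_sum \<mu>_def mvec_def by simp
  finally show ?thesis unfolding \<mu>_def by (simp add: power2_eq_square)
qed

lemma mvec_square_le: "(mvec M x s)\<^sup>2 \<le> mvec M (\<lambda>j. (x j)\<^sup>2) s"
  using varP_eq[of x s] varP_nonneg[of x s] by simp

lemma mvec_sqrt_le: "(\<And>j. 0 \<le> z j) \<Longrightarrow> mvec M (\<lambda>j. sqrt (z j)) s \<le> sqrt (mvec M z s)"
  using mvec_square_le[of "\<lambda>j. sqrt (z j)" s] by (intro real_le_rsqrt) simp

lemma mvec_power_2pow_le: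
  assumes "\<And>j. 0 \<le> y j"
  shows "(mvec M y s) ^ 2 ^ k \<le> mvec M (\<lambda>j. y j ^ 2 ^ k) s"
proof (induction k)
  case (Suc k)
  have "(mvec M y s) ^ 2 ^ Suc k = ((mvec M y s) ^ 2 ^ k)\<^sup>2"
    by (simp add: power_mult[symmetric] mult.commute)
  also have "\<dots> \<le> (mvec M (\<lambda>j. y j ^ 2 ^ k) s)\<^sup>2"
    using Suc assms by (intro power_mono zero_le_power) (auto intro: mvec_ge)
  also have "\<dots> \<le> mvec M (\<lambda>j. (y j ^ 2 ^ k)\<^sup>2) s" by (rule mvec_square_le)
  also have "\<dots> = mvec M (\<lambda>j. y j ^ 2 ^ Suc k) s"
    by (simp add: power_mult[symmetric] mult.commute)
  finally show ?case .
qed simp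

lemma abs_mvec_le_sqrt:
  assumes "0 \<le> A" "\<And>j. 0 \<le> V j" "\<And>j. \<bar>d j\<bar> \<le> sqrt (A * V j) + B"
  shows "\<bar>mvec M d s\<bar> \<le> sqrt (A * mvec M V s) + B"
proof -
  have "\<bar>mvec M d s\<bar> \<le> mvec M (\<lambda>j. sqrt (A * V j) + B) s"
    using abs_mvec_le_mvec_abs[of d s] mvec_mono[of "\<lambda>j. \<bar>d j\<bar>"] assms(3) by (meson order_trans)
  also have "\<dots> = mvec M (\<lambda>j. sqrt (A * V j)) s + B" by (simp add: mvec_add)
  also have "\<dots> \<le> sqrt (A * mvec M V s) + B"
    using mvec_sqrt_le[of "\<lambda>j. A * V j" s] assms(1,2) by (simp add: mvec_cmult)
  finally show ?thesis .
qed

lemma power_variance_gap_le: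
  assumes h0: "\<And>j. 0 \<le> h j" and hH: "\<And>j. h j \<le> H" and drift: "\<And>j. h j - mvec M h j \<le> 1"
  shows "(h j ^ 2 ^ k)\<^sup>2 - (mvec M (\<lambda>s. h s ^ 2 ^ k) j)\<^sup>2 \<le> 2 * 2 ^ k * H ^ (2 * 2 ^ k - 1)"
proof -
  define m :: nat where "m = 2 ^ k"
  define x where "x = h j ^ m"
  define \<mu> where "\<mu> = mvec M (\<lambda>s. h s ^ m) j"
  have H0: "0 \<le> H" using h0 hH order_trans by blast
  have x0: "0 \<le> x" and xH: "x \<le> H ^ m" unfolding x_def using h0 hH by (simp_all add: power_mono)
  have \<mu>0: "0 \<le> \<mu>" and \<mu>H: "\<mu> \<le> H ^ m"
    unfolding \<mu>_def using h0 hH by (auto intro!: mvec_ge mvec_le power_mono)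
  have "(mvec M h j) ^ m \<le> \<mu>" unfolding \<mu>_def m_def by (rule mvec_power_2pow_le[OF h0])
  moreover have "h j ^ m - (mvec M h j) ^ m \<le> real m * H ^ (m - 1)"
    using h0 hH drift by (intro power_diff_le_of_diff_le_1 mvec_ge) simp_all
  ultimately have gap: "x - \<mu> \<le> real m * H ^ (m - 1)" unfolding x_def by linarith
  have "x\<^sup>2 - \<mu>\<^sup>2 \<le> 2 * real m * H ^ (2 * m - 1)"
  proof (cases "x \<le> \<mu>")
    case True
    then have "x\<^sup>2 \<le> \<mu>\<^sup>2" using x0 by (simp add: power_mono)
    moreover have "0 \<le> 2 * real m * H ^ (2 * m - 1)" using H0 by simp
    ultimately show ?thesis by linarith
  next
    case False
    have "x\<^sup>2 - \<mu>\<^sup>2 = (x - \<mu>) * (x + \<mu>)" by (simp add: power2_eq_square algebra_simps)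
    also have "\<dots> \<le> (real m * H ^ (m - 1)) * (2 * H ^ m)"
      using False gap x0 \<mu>0 xH \<mu>H by (intro mult_mono) simp_all
    also have "\<dots> = 2 * real m * H ^ (m - 1 + m)" by (simp add: power_add)
    also have "m - 1 + m = 2 * m - 1" unfolding m_def by simp
    finally show ?thesis .
  qed
  then show ?thesis unfolding x_def \<mu>_def m_def by simp
qed

end

section \<open>A doubling recursion\<close>

lemma two_power_le_scaled_delta_power:
  fixes x :: real
  assumes x0: "0 < x" and x1: "x < 1/4" and k: "k \<ge> 1"
  shows "2 ^ 2 ^ k \<le> x * (2 / sqrt x + 2) ^ 2 ^ k"
proof -
  obtain k' where k': "k = Suc k'" using k by (cases k) auto
  have "(sqrt x) ^ 2 ^ k = x ^ 2 ^ k'"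
    unfolding k' power_Suc power_mult using x0 by simp
  then have e: "(2 / sqrt x) ^ 2 ^ k = 2 ^ 2 ^ k / x ^ 2 ^ k'" by (simp add: power_divide)
  have "x ^ 2 ^ k' \<le> x ^ 1" using x0 x1 by (intro power_decreasing) simp_all
  have "(2::real) ^ 2 ^ k = x * (2 ^ 2 ^ k / x)" using x0 by simp
  also have "\<dots> \<le> x * (2 ^ 2 ^ k / x ^ 2 ^ k')"
    using x0 \<open>x ^ 2 ^ k' \<le> x ^ 1\<close> by (intro mult_left_mono divide_left_mono) simp_all
  also have "\<dots> = x * (2 / sqrt x) ^ 2 ^ k" unfolding e ..
  also have "\<dots> \<le> x * (2 / sqrt x + 2) ^ 2 ^ k"
    using x0 by (intro mult_left_mono power_mono) simp_all
  finally show ?thesis .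
qed

lemma small_terms_le_scaled_delta_power:
  fixes x :: real
  assumes x0: "0 < x" and x1: "x < 1/4"
  shows "sqrt (2 * 2 ^ k * x) + 2 ^ k * x \<le> x * (2 / sqrt x + 2) ^ 2 ^ k"
proof (cases "k = 0")
  case True
  have "x * (2 / sqrt x + 2) = 2 * (x / sqrt x) + 2 * x" by (simp add: algebra_simps)
  also have "x / sqrt x = sqrt x" using x0 by (intro real_div_sqrt) simp
  finally have "x * (2 / sqrt x + 2) = 2 * sqrt x + 2 * x" .
  moreover have "sqrt (2 * x) \<le> 2 * sqrt x"
  proof -
    have "sqrt 2 \<le> (2::real)" by (rule real_le_lsqrt) simp_all
    then show ?thesis using x0 by (simp add: real_sqrt_mult mult_right_mono)
  qed
  ultimately show ?thesis using True x0 by simp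
next
  case False
  define m :: real where "m = 2 ^ k"
  have m1: "m \<ge> 1" unfolding m_def by simp
  have "sqrt (2 * m * x) \<le> m"
  proof (rule real_le_lsqrt)
    have "2 * m * x \<le> 2 * m * (1/4)" using x0 x1 m1 by (intro mult_left_mono) simp_all
    also have "\<dots> \<le> m\<^sup>2" using m1 by (simp add: power2_eq_square)
    finally show "2 * m * x \<le> m\<^sup>2" .
  qed (use m1 in simp)
  moreover have "m * x \<le> m" using x0 x1 m1 by (simp add: mult_left_le)
  ultimately have "sqrt (2 * m * x) + m * x \<le> 2 * m" by linarith
  also have "\<dots> = 2 ^ Suc k" unfolding m_def by simp
  also have "\<dots> \<le> 2 ^ 2 ^ k"
    by (rule power_increasing) (simp_all add: Suc_leI less_exp)
  also have "\<dots> \<le> x * (2 / sqrt x + 2) ^ 2 ^ k"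
    using False x0 x1 by (intro two_power_le_scaled_delta_power) simp_all
  finally show ?thesis unfolding m_def .
qed

lemma doubling_sqrt_term_le:
  fixes A Hp Y e1 :: real
  assumes A: "A > 0" and Hp: "Hp \<ge> 1" and Y0: "Y \<ge> 0"
    and e1: "e1 \<le> Hp ^ (2 * 2 ^ k - 1) * (A * Hp) * Y ^ (2 * 2 ^ k)"
  shows "sqrt (A * (e1 + 2 ^ Suc k * Hp ^ (2 ^ Suc k - 1)))
    \<le> Hp ^ (2 ^ k - 1) * (A * Hp * Y ^ 2 ^ k + sqrt (2 * 2 ^ k * (A * Hp)))"
proof -
  define m :: nat where "m = 2 ^ k"
  define x where "x = A * Hp"
  have x0: "0 < x" unfolding x_def using A Hp by simp
  have H0: "0 \<le> Hp ^ (m - 1)" using Hp by simp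
  have "m \<ge> 1" unfolding m_def by simp
  then have "2 * m - 1 = (m - 1) + (m - 1) + 1" by simp
  then have Hp_2m: "Hp ^ (2 * m - 1) = (Hp ^ (m - 1))\<^sup>2 * Hp"
    by (simp only: power_add power2_eq_square power_one_right)
  have "A * (e1 + 2 ^ Suc k * Hp ^ (2 ^ Suc k - 1))
      \<le> A * (Hp ^ (2 * m - 1) * x * Y ^ (2 * m) + 2 * m * Hp ^ (2 * m - 1))"
    using e1 A unfolding m_def x_def by (intro mult_left_mono add_mono) simp_all
  also have "\<dots> = (Hp ^ (m - 1))\<^sup>2 * ((x * Y ^ m)\<^sup>2 + 2 * m * x)"
  proof -
    have "Y ^ (2 * m) = (Y ^ m)\<^sup>2" by (simp only: mult.commute[of 2 m] power_mult)
    then show ?thesis unfolding Hp_2m x_def power2_eq_square by (simp add: algebra_simps)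
  qed
  finally have "sqrt (A * (e1 + 2 ^ Suc k * Hp ^ (2 ^ Suc k - 1)))
      \<le> Hp ^ (m - 1) * sqrt ((x * Y ^ m)\<^sup>2 + 2 * m * x)"
    using H0 by (metis real_sqrt_le_mono real_sqrt_mult real_sqrt_abs abs_of_nonneg power2_eq_square)
  also have "\<dots> \<le> Hp ^ (m - 1) * (x * Y ^ m + sqrt (2 * m * x))"
  proof (rule mult_left_mono[OF _ H0])
    have "sqrt ((x * Y ^ m)\<^sup>2 + 2 * m * x) \<le> sqrt ((x * Y ^ m)\<^sup>2) + sqrt (2 * m * x)"
      using x0 by (intro sqrt_add_le_add_sqrt) simp_all
    then show "sqrt ((x * Y ^ m)\<^sup>2 + 2 * m * x) \<le> x * Y ^ m + sqrt (2 * m * x)"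
      using x0 Y0 by simp
  qed
  finally show ?thesis unfolding m_def x_def by simp
qed

lemma doubling_recursion_step:
  fixes A Hp Y e0 e1 :: real
  defines "x \<equiv> A * Hp" and "\<delta> \<equiv> 2 / sqrt (A * Hp) + 2"
  assumes A: "A > 0" and Hp: "Hp \<ge> 1" and x1: "A * Hp < 1/4" and Y0: "Y \<ge> 0"
    and e1: "e1 \<le> Hp ^ (2 * 2 ^ k - 1) * x * Y ^ (2 * 2 ^ k)"
    and e0: "e0 \<le> sqrt (A * (e1 + 2 ^ Suc k * Hp ^ (2 ^ Suc k - 1))) + A * 2 ^ k * Hp ^ 2 ^ k"
  shows "e0 \<le> Hp ^ (2 ^ k - 1) * x * (Y + \<delta>) ^ 2 ^ k"
proof -
  have x0: "0 < x" unfolding x_def using A Hp by simp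
  have d0: "0 \<le> \<delta>" unfolding \<delta>_def using x0 x_def by (intro add_nonneg_nonneg divide_nonneg_nonneg) simp_all
  have H0: "0 \<le> Hp ^ (2 ^ k - 1)" using Hp by simp
  have "e0 \<le> Hp ^ (2 ^ k - 1) * (x * Y ^ 2 ^ k + sqrt (2 * 2 ^ k * x)) + A * 2 ^ k * Hp ^ 2 ^ k"
    using e0 doubling_sqrt_term_le[OF A Hp Y0 e1[unfolded x_def]] unfolding x_def by linarith
  also have "\<dots> = Hp ^ (2 ^ k - 1) * (x * Y ^ 2 ^ k + (sqrt (2 * 2 ^ k * x) + 2 ^ k * x))"
    unfolding x_def power_minus_mult[of "2 ^ k" Hp, symmetric, OF zero_less_power[OF pos2]]
    by (simp add: algebra_simps)
  also have "\<dots> \<le> Hp ^ (2 ^ k - 1) * (x * Y ^ 2 ^ k + x * \<delta> ^ 2 ^ k)"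
    using small_terms_le_scaled_delta_power[of x k] x0 x1 H0
    by (intro mult_left_mono add_left_mono) (simp_all add: \<delta>_def x_def)
  also have "\<dots> = Hp ^ (2 ^ k - 1) * x * (Y ^ 2 ^ k + \<delta> ^ 2 ^ k)" by (simp add: algebra_simps)
  also have "\<dots> \<le> Hp ^ (2 ^ k - 1) * x * (Y + \<delta>) ^ 2 ^ k"
  proof (rule mult_left_mono)
    have "Suc (2 ^ k - 1) = (2::nat) ^ k" by simp
    then show "Y ^ 2 ^ k + \<delta> ^ 2 ^ k \<le> (Y + \<delta>) ^ 2 ^ k"
      using power_Suc_add_le[OF Y0 d0, of "2 ^ k - 1"] by metis
  qed (use H0 x0 in simp)
  finally show ?thesis .
qed

lemma doubling_recursion_bound:
  fixes e :: "nat \<Rightarrow> real" and A Hp :: real and ell :: nat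
  assumes A: "A > 0" and Hp: "Hp \<ge> 1" and x1: "A * Hp < 1/4" and ell: "ell \<ge> 1"
    and Hp_le: "Hp \<le> 2 ^ 2 ^ ell"
    and base: "e ell \<le> Hp ^ 2 ^ ell"
    and step: "\<And>k. k < ell \<Longrightarrow>
      e k \<le> sqrt (A * (e (Suc k) + 2 ^ Suc k * Hp ^ (2 ^ Suc k - 1))) + A * 2 ^ k * Hp ^ 2 ^ k"
  shows "e 0 \<le> real (ell + 1) * (2 * sqrt (A * Hp) + 2 * (A * Hp))"
proof -
  define x where "x = A * Hp"
  define \<delta> where "\<delta> = 2 / sqrt x + 2"
  have x0: "0 < x" unfolding x_def using A Hp by simp
  \<comment> \<open>Downward induction; \<delta> absorbs the base case and the lower-order terms of every step.\<close>
  have "e (ell - j) \<le> Hp ^ (2 ^ (ell - j) - 1) * x * (real (j + 1) * \<delta>) ^ 2 ^ (ell - j)"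
    if "j \<le> ell" for j
    using that
  proof (induction j)
    case 0
    have "Hp \<le> x * \<delta> ^ 2 ^ ell"
      using Hp_le two_power_le_scaled_delta_power[of x ell] x0 x1 ell unfolding x_def \<delta>_def by simp
    have "e ell \<le> Hp ^ (2 ^ ell - 1) * Hp"
      using base power_minus_mult[of "2 ^ ell" Hp] by simp
    also have "\<dots> \<le> Hp ^ (2 ^ ell - 1) * (x * \<delta> ^ 2 ^ ell)"
      using \<open>Hp \<le> x * \<delta> ^ 2 ^ ell\<close> Hp by (intro mult_left_mono) simp_all
    finally show ?case by (simp add: mult.assoc)
  next
    case (Suc j)
    define k where "k = ell - Suc j"
    have "ell - j = Suc k" "k < ell" using Suc.prems unfolding k_def by auto
    have "e k \<le> Hp ^ (2 ^ k - 1) * x * (real (j + 1) * \<delta> + \<delta>) ^ 2 ^ k"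
      using Suc \<open>ell - j = Suc k\<close> step[OF \<open>k < ell\<close>] A Hp x1 unfolding x_def \<delta>_def
      by (intro doubling_recursion_step) (simp_all add: mult.commute[of 2])
    then show ?case unfolding k_def[symmetric] by (simp add: algebra_simps)
  qed
  from this[of ell] have "e 0 \<le> real (ell + 1) * (x * \<delta>)" by (simp add: algebra_simps)
  also have "x * \<delta> = 2 * (x / sqrt x) + 2 * x" unfolding \<delta>_def by (simp add: algebra_simps)
  also have "x / sqrt x = sqrt x" using x0 by (intro real_div_sqrt) simp
  finally show ?thesis unfolding x_def by simp
qed

section \<open>Perturbation of the gain\<close>

locale perturbation = M: stoch_matrix M + Mh: stoch_matrix Mh
  for M Mh :: "'s::finite \<Rightarrow> 's \<Rightarrow> real"
begin

definition delta_mvec :: "('s \<Rightarrow> real) \<Rightarrow> 's \<Rightarrow> real" where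
  "delta_mvec x j = mvec Mh x j - mvec M x j"

lemma gain_difference_eq:
  assumes "\<And>j. h j - mvec M h j = rp j - c"
  shows "mvec (Pinf Mh) rp s - c = mvec (Pinf Mh) (delta_mvec h) s"
proof -
  have "rp = (\<lambda>j. c + (h j - mvec M h j))" using assms by (simp add: fun_eq_iff)
  then have "mvec (Pinf Mh) rp s = c + mvec (Pinf Mh) (mvec Mh h) s - mvec (Pinf Mh) (mvec M h) s"
    using stoch_matrix.mvec_const[OF Mh.stoch_matrix_Pinf]
    by (simp add: mvec_add mvec_diff Mh.Pinf_mvec_self)
  then show ?thesis unfolding delta_mvec_def mvec_diff by simp
qed

lemma stationary_variance_le:
  assumes "\<And>j. (x j)\<^sup>2 - (mvec M x j)\<^sup>2 \<le> c"
  shows "mvec (Pinf Mh) (varP M x) s \<le> \<bar>mvec (Pinf Mh) (delta_mvec (\<lambda>j. (x j)\<^sup>2)) s\<bar> + c"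
proof -
  have "varP M x = (\<lambda>j. ((x j)\<^sup>2 - (mvec M x j)\<^sup>2) + (mvec Mh (\<lambda>j. (x j)\<^sup>2) j - (x j)\<^sup>2)
      - delta_mvec (\<lambda>j. (x j)\<^sup>2) j)"
    by (simp add: fun_eq_iff M.varP_eq delta_mvec_def)
  then have "mvec (Pinf Mh) (varP M x) s
      = mvec (Pinf Mh) (\<lambda>j. (x j)\<^sup>2 - (mvec M x j)\<^sup>2) s - mvec (Pinf Mh) (delta_mvec (\<lambda>j. (x j)\<^sup>2)) s"
    by (simp add: mvec_add mvec_diff Mh.Pinf_mvec_self)
  also have "\<dots> \<le> c + \<bar>mvec (Pinf Mh) (delta_mvec (\<lambda>j. (x j)\<^sup>2)) s\<bar>"
    using stoch_matrix.mvec_le[OF Mh.stoch_matrix_Pinf, of "\<lambda>j. (x j)\<^sup>2 - (mvec M x j)\<^sup>2" c s, OF assms]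
      abs_ge_minus_self[of "mvec (Pinf Mh) (delta_mvec (\<lambda>j. (x j)\<^sup>2)) s"]
    by linarith
  finally show ?thesis by simp
qed

lemma power_perturbation_step:
  assumes h0: "\<And>j. 0 \<le> h j" and hH: "\<And>j. h j \<le> H" and drift: "\<And>j. h j - mvec M h j \<le> 1"
    and A: "0 \<le> A"
    and hyp: "\<And>j. \<bar>delta_mvec (\<lambda>s'. h s' ^ 2 ^ k) j\<bar> \<le> sqrt (A * varP M (\<lambda>s'. h s' ^ 2 ^ k) j) + B"
  shows "\<bar>mvec (Pinf Mh) (delta_mvec (\<lambda>s'. h s' ^ 2 ^ k)) s\<bar>
    \<le> sqrt (A * (\<bar>mvec (Pinf Mh) (delta_mvec (\<lambda>s'. h s' ^ 2 ^ Suc k)) s\<bar> + 2 ^ Suc k * H ^ (2 ^ Suc k - 1))) + B"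
proof -
  have sq: "(\<lambda>j. (h j ^ 2 ^ k)\<^sup>2) = (\<lambda>j. h j ^ 2 ^ Suc k)"
    by (simp add: power_mult[symmetric] mult.commute)
  have "mvec (Pinf Mh) (varP M (\<lambda>s'. h s' ^ 2 ^ k)) s
      \<le> \<bar>mvec (Pinf Mh) (delta_mvec (\<lambda>s'. h s' ^ 2 ^ Suc k)) s\<bar> + 2 ^ Suc k * H ^ (2 ^ Suc k - 1)"
    using stationary_variance_le[of "\<lambda>j. h j ^ 2 ^ k" "2 * 2 ^ k * H ^ (2 * 2 ^ k - 1)" s]
      M.power_variance_gap_le[OF h0 hH drift] unfolding sq by simp
  then show ?thesis
    using stoch_matrix.abs_mvec_le_sqrt[OF Mh.stoch_matrix_Pinf A M.varP_nonneg hyp]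
    by (meson A add_le_cancel_right mult_left_mono order_trans real_sqrt_le_iff)
qed

lemma power_perturbation_base:
  assumes "\<And>j. 0 \<le> h j" "\<And>j. h j \<le> H"
  shows "\<bar>mvec (Pinf Mh) (delta_mvec (\<lambda>s'. h s' ^ m)) s\<bar> \<le> H ^ m"
proof -
  have "0 \<le> mvec N (\<lambda>s'. h s' ^ m) j \<and> mvec N (\<lambda>s'. h s' ^ m) j \<le> H ^ m"
    if "stoch_matrix N" for N j
    using assms stoch_matrix.mvec_ge[OF that] stoch_matrix.mvec_le[OF that] by (simp add: power_mono)
  then have "\<bar>delta_mvec (\<lambda>s'. h s' ^ m) j\<bar> \<le> H ^ m" for j
    unfolding delta_mvec_def using M.stoch_matrix_axioms Mh.stoch_matrix_axioms by (smt (verit))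
  then show ?thesis by (rule stoch_matrix.abs_mvec_le[OF Mh.stoch_matrix_Pinf])
qed

lemma gain_perturbation_bound:
  fixes rp h :: "'s \<Rightarrow> real" and c A Hp :: real and ell :: nat
  assumes rp: "\<And>j. 0 \<le> rp j \<and> rp j \<le> 1" and c: "0 \<le> c" "c \<le> 1"
    and poisson: "\<And>j. h j - mvec M h j = rp j - c"
    and h0: "\<And>j. 0 \<le> h j" and hH: "\<And>j. h j \<le> Hp"
    and Hp: "1 \<le> Hp" "Hp \<le> 2 ^ 2 ^ ell" and ell: "1 \<le> ell" and A: "0 < A"
    and hyp: "\<And>k j. k \<le> ell \<Longrightarrow> \<bar>delta_mvec (\<lambda>s'. h s' ^ 2 ^ k) j\<bar>
      \<le> sqrt (A * varP M (\<lambda>s'. h s' ^ 2 ^ k) j) + A * 2 ^ k * Hp ^ 2 ^ k"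
  shows "\<bar>mvec (Pinf Mh) rp s - c\<bar> \<le> real (ell + 1) * (2 * sqrt (A * Hp) + 2 * (A * Hp))"
proof (cases "A * Hp < 1/4")
  case True
  define e where "e k = \<bar>mvec (Pinf Mh) (delta_mvec (\<lambda>s'. h s' ^ 2 ^ k)) s\<bar>" for k
  have "e 0 \<le> real (ell + 1) * (2 * sqrt (A * Hp) + 2 * (A * Hp))"
  proof (rule doubling_recursion_bound[OF A Hp(1) True ell Hp(2)])
    show "e ell \<le> Hp ^ 2 ^ ell" unfolding e_def by (rule power_perturbation_base[OF h0 hH])
    have drift: "h j - mvec M h j \<le> 1" for j using poisson[of j] rp[of j] c by linarith
    show "e k \<le> sqrt (A * (e (Suc k) + 2 ^ Suc k * Hp ^ (2 ^ Suc k - 1))) + A * 2 ^ k * Hp ^ 2 ^ k"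
      if "k < ell" for k
      unfolding e_def using A that by (intro power_perturbation_step[OF h0 hH drift] hyp) simp_all
  qed
  then show ?thesis using gain_difference_eq[OF poisson] by (simp add: e_def)
next
  case False
  have "0 \<le> mvec (Pinf Mh) rp s" using rp by (intro stoch_matrix.mvec_ge[OF Mh.stoch_matrix_Pinf]) simp
  moreover have "mvec (Pinf Mh) rp s \<le> 1" using rp by (intro stoch_matrix.mvec_le[OF Mh.stoch_matrix_Pinf]) simp
  ultimately have "\<bar>mvec (Pinf Mh) rp s - c\<bar> \<le> 1" using c by linarith
  also have "1 \<le> 2 * sqrt (A * Hp)"
  proof -
    have "sqrt (1/4) \<le> sqrt (A * Hp)" using False by (intro real_sqrt_le_mono) simp
    then show ?thesis by (simp add: real_sqrt_divide)
  qed
  also have "\<dots> \<le> 1 * (2 * sqrt (A * Hp) + 2 * (A * Hp))" using A Hp by simp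
  also have "\<dots> \<le> real (ell + 1) * (2 * sqrt (A * Hp) + 2 * (A * Hp))"
    using A Hp by (intro mult_right_mono) simp_all
  finally show ?thesis .
qed

end

lemma stoch_matrix_Ppi:
  assumes "stoch_kernel P" "policy pol"
  shows "stoch_matrix (Ppi P pol)"
proof
  show "0 \<le> Ppi P pol s s'" for s s'
    using assms unfolding Ppi_def stoch_kernel_def policy_def by (intro sum_nonneg) simp
  show "(\<Sum>s'\<in>UNIV. Ppi P pol s s') = 1" for s
  proof -
    have "(\<Sum>s'\<in>UNIV. Ppi P pol s s') = (\<Sum>a\<in>UNIV. pol s a * (\<Sum>s'\<in>UNIV. P s a s'))"
      unfolding Ppi_def sum_distrib_left by (rule sum.swap)
    then show ?thesis using assms unfolding stoch_kernel_def policy_def by simp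
  qed
qed

lemma rpi_bounds:
  assumes "policy pol" "\<And>s a. 0 \<le> r s a \<and> r s a \<le> 1"
  shows "0 \<le> rpi r pol s \<and> rpi r pol s \<le> 1"
  using assms unfolding rpi_def policy_def by (auto intro!: weighted_sum_ge weighted_sum_le)

lemma gain_bounds:
  assumes "stoch_kernel P" "policy pol" "\<And>s a. 0 \<le> r s a \<and> r s a \<le> 1"
  shows "0 \<le> gain P r pol s \<and> gain P r pol s \<le> 1"
proof -
  interpret stoch_matrix "Pinf (Ppi P pol)"
    using stoch_matrix.stoch_matrix_Pinf[OF stoch_matrix_Ppi[OF assms(1,2)]] .
  show ?thesis unfolding gain_def using rpi_bounds[OF assms(2,3)] by (auto intro: mvec_ge mvec_le)
qed

lemma bias_poisson:
  assumes "stoch_kernel P" "policy pol" "\<And>s. gain P r pol s = c"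
  shows "bias P r pol s - mvec (Ppi P pol) (bias P r pol) s = rpi r pol s - c"
proof -
  have "bias P r pol = (\<lambda>s. cesaro_lim (\<lambda>T. bias_partial_sum (Ppi P pol) (rpi r pol) T s))"
    unfolding bias_def gain_def bias_partial_sum_def ..
  then show ?thesis
    using stoch_matrix.poisson_equation[OF stoch_matrix_Ppi[OF assms(1,2)], of "rpi r pol" s] assms(3)
    unfolding gain_def by simp
qed

lemma abs_le_supnorm: "\<bar>x s\<bar> \<le> supnorm x"
  unfolding supnorm_def by (rule Max_ge) auto

lemma supnorm_le: "(\<And>s. \<bar>x s\<bar> \<le> b) \<Longrightarrow> supnorm x \<le> b"
  unfolding supnorm_def by (subst Max_le_iff) auto

lemma loglog_ceiling_bound:
  fixes H :: real
  assumes "0 \<le> H"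
  defines "ell \<equiv> nat \<lceil>log 2 (log 2 (H + 4))\<rceil>"
  shows "1 \<le> ell" and "H + 4 \<le> 2 ^ 2 ^ ell"
proof -
  define L where "L = log 2 (H + 4)"
  have "log 2 4 \<le> L" unfolding L_def using assms(1) by simp
  moreover have "log 2 (4::real) = 2" using log_pow_cancel[of 2 2] by simp
  ultimately have L2: "2 \<le> L" by simp
  then have "1 \<le> log 2 L" by simp
  then show "1 \<le> ell" unfolding ell_def L_def by linarith
  have "log 2 L \<le> real ell" unfolding ell_def L_def by linarith
  then have "L \<le> 2 ^ ell" using L2 by (simp add: log_le_iff powr_realpow)
  then have "2 powr L \<le> 2 ^ 2 ^ ell" by (simp add: powr_realpow[symmetric])
  moreover have "2 powr L = H + 4" unfolding L_def using assms(1) by simp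
  ultimately show "H + 4 \<le> 2 ^ 2 ^ ell" by simp
qed

lemma sum_kernel_diff_eq: "(\<Sum>s'\<in>UNIV. (A s s' - B s s') * x s') = mvec A x s - mvec B x s"
  unfolding mvec_def by (simp add: left_diff_distrib sum_subtractf)

theorem mainTheorem17:
  fixes P Phat :: "'s::finite \<Rightarrow> 'a::finite \<Rightarrow> 's \<Rightarrow> real"
    and r :: "'s \<Rightarrow> 'a \<Rightarrow> real"
    and pol :: "'s \<Rightarrow> 'a \<Rightarrow> real"
    and n :: nat and \<alpha> :: real
  assumes "stoch_kernel P" and "stoch_kernel Phat"
    and "\<And>s a. 0 \<le> r s a \<and> r s a \<le> 1"
    and "n > 0"
    and "policy pol"
    and "\<exists>c. \<forall>s. gain P r pol s = c"
    and "\<alpha> > 0"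
  defines "hbar \<equiv> (\<lambda>s. bias P r pol s - Min (range (bias P r pol)))"
    and "ell \<equiv> nat \<lceil>log 2 (log 2 (supnorm (\<lambda>s. bias P r pol s - Min (range (bias P r pol))) + 4))\<rceil>"
  assumes "\<And>k s. k \<le> ell \<Longrightarrow>
      \<bar>(\<Sum>s'\<in>UNIV. (Ppi Phat pol s s' - Ppi P pol s s') * hbar s' ^ (2 ^ k))\<bar>
        \<le> sqrt (\<alpha> * varP (Ppi P pol) (\<lambda>s'. hbar s' ^ (2 ^ k)) s / real n)
           + \<alpha> * 2 ^ k / real n * (supnorm hbar + 1) ^ (2 ^ k)"
  shows "supnorm (\<lambda>s. gain Phat r pol s - gain P r pol s)
    \<le> 2 * (real ell + 1) * sqrt (\<alpha> * (supnorm hbar + 1) / real n)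
       + (real ell + 1) * (2 * \<alpha> / real n) * (supnorm hbar + 1)"
proof -
  interpret perturbation "Ppi P pol" "Ppi Phat pol"
    unfolding perturbation_def using stoch_matrix_Ppi[OF assms(1,5)] stoch_matrix_Ppi[OF assms(2,5)] ..
  obtain c where c: "\<And>s. gain P r pol s = c" using assms(6) by blast
  have "0 \<le> gain P r pol s \<and> gain P r pol s \<le> 1" for s by (rule gain_bounds[OF assms(1,5,3)])
  then have "0 \<le> c" "c \<le> 1" unfolding c by simp_all
  have hbar_poisson: "hbar j - mvec (Ppi P pol) hbar j = rpi r pol j - c" for j
    using bias_poisson[OF assms(1,5) c, of j] unfolding hbar_def M.mvec_shift by simp
  have rp: "0 \<le> rpi r pol j \<and> rpi r pol j \<le> 1" for j by (rule rpi_bounds[OF assms(5,3)])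
  have h0: "0 \<le> hbar j" for j unfolding hbar_def by (simp add: Min_le)
  have hH: "hbar j \<le> supnorm hbar + 1" for j using abs_le_supnorm[of hbar j] by simp
  have "0 \<le> supnorm hbar" using abs_le_supnorm[of hbar undefined] by simp
  have "\<bar>gain Phat r pol s - gain P r pol s\<bar>
      \<le> real (ell + 1) * (2 * sqrt (\<alpha> / n * (supnorm hbar + 1)) + 2 * (\<alpha> / n * (supnorm hbar + 1)))" for s
    unfolding c unfolding gain_def
  proof (rule gain_perturbation_bound[OF rp \<open>0 \<le> c\<close> \<open>c \<le> 1\<close> hbar_poisson h0 hH])
    show "1 \<le> ell" "supnorm hbar + 1 \<le> 2 ^ 2 ^ ell"
      using loglog_ceiling_bound[OF \<open>0 \<le> supnorm hbar\<close>] unfolding ell_def hbar_def[symmetric] by simp_all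
    show "\<bar>delta_mvec (\<lambda>s'. hbar s' ^ 2 ^ k) j\<bar> \<le> sqrt (\<alpha> / n * varP (Ppi P pol) (\<lambda>s'. hbar s' ^ 2 ^ k) j)
        + \<alpha> / n * 2 ^ k * (supnorm hbar + 1) ^ 2 ^ k" if "k \<le> ell" for k j
      using assms(10)[OF that, of j] unfolding delta_mvec_def sum_kernel_diff_eq[symmetric] by (simp add: field_simps)
  qed (use \<open>0 \<le> supnorm hbar\<close> assms(4,7) in simp_all)
  then show ?thesis by (intro supnorm_le) (simp add: algebra_simps)
qed

end
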